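(* Let $P_1,P_2,P_3$ be points on a circle of radius $R$, and let $P_1',P_2',P_3'$ be points in $\mathbb R^2$ with $\|P_j'-P_k'\|\ge d$ for $j\ne k$, for some $d>0$, and $\|P_j-P_j'\|\le\delta$ for $j=1,2,3$, where $\delta\ge 0$. If $$\delta<\frac{d^2}{2\left(R+d+\sqrt{(R+d)^2-d^2}\right)},$$ then the points $P_1',P_2',P_3'$ are not collinear. *)

theory Defs
  imports "HOL-Analysis.Analysis"
begin

end

theory Submission
  imports Defs
begin

(* If Q1, Q2, Q3 were collinear, an isometry moves their line onto the x-axis. Then every P_j
   lies in the strip |y| <= delta, and the x-coordinates of the P_j are pairwise at least
   g = d - 2 delta apart. For three points on a circle of radius R, abc = 4 R area, i.e. the
   product of the squared sides equals 4 R^2 K^2 with K twice the signed area. Sorting the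
   points by x, K is at most 2 delta times the horizontal extent x3 - x1, the two short sides
   are at least g and the long one at least x3 - x1; hence g^2 <= 4 R delta. The threshold on
   delta is the smaller root of (d - 2 delta)^2 = 4 R delta, so this is impossible. *)

lemma threshold_imp_gap_bounds:
  fixes R d \<delta> :: real
  assumes "R > 0" "d > 0" "\<delta> \<ge> 0"
    and "\<delta> < d\<^sup>2 / (2 * (R + d + sqrt ((R + d)\<^sup>2 - d\<^sup>2)))"
  shows "2 * \<delta> < d" and "4 * R * \<delta> < (d - 2 * \<delta>)\<^sup>2"
proof -
  define s where "s = sqrt ((R + d)\<^sup>2 - d\<^sup>2)"
  have s_sq: "s\<^sup>2 = (R + d)\<^sup>2 - d\<^sup>2" and "s \<ge> 0"
    using assms by (simp_all add: s_def)
  have "R\<^sup>2 \<le> s\<^sup>2"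
    using s_sq assms by (simp add: power2_eq_square algebra_simps)
  then have "R \<le> s"
    using \<open>s \<ge> 0\<close> by (rule power2_le_imp_le)
  have "\<delta> < d\<^sup>2 / (2 * (R + d + s))"
    using assms(4) by (simp add: s_def)
  then have "2 * \<delta> * (R + d + s) < d\<^sup>2"
    using assms \<open>s \<ge> 0\<close> by (simp add: pos_less_divide_eq mult_ac)
  also have "d\<^sup>2 = (R + d - s) * (R + d + s)"
    using s_sq by (simp add: algebra_simps power2_eq_square)
  finally have lt: "2 * \<delta> < R + d - s"
    using assms \<open>s \<ge> 0\<close> by (simp add: mult_less_cancel_right)
  with \<open>R \<le> s\<close> show "2 * \<delta> < d"
    by linarith
  have "(d - 2 * \<delta>)\<^sup>2 - 4 * R * \<delta> = (R + d - 2 * \<delta> - s) * (R + d - 2 * \<delta> + s)"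
    using s_sq by (simp add: algebra_simps power2_eq_square)
  also have "\<dots> > 0"
    using lt \<open>s \<ge> 0\<close> by (intro mult_pos_pos) auto
  finally show "4 * R * \<delta> < (d - 2 * \<delta>)\<^sup>2"
    by simp
qed

lemma circumradius_sides_product:
  fixes x1 x2 x3 y1 y2 y3 a b R :: real
  assumes "(x1 - a)\<^sup>2 + (y1 - b)\<^sup>2 = R\<^sup>2" "(x2 - a)\<^sup>2 + (y2 - b)\<^sup>2 = R\<^sup>2"
    and "(x3 - a)\<^sup>2 + (y3 - b)\<^sup>2 = R\<^sup>2"
  shows "((x1 - x2)\<^sup>2 + (y1 - y2)\<^sup>2) * ((x2 - x3)\<^sup>2 + (y2 - y3)\<^sup>2) * ((x1 - x3)\<^sup>2 + (y1 - y3)\<^sup>2)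
         = 4 * R\<^sup>2 * ((x2 - x1) * (y3 - y1) - (x3 - x1) * (y2 - y1))\<^sup>2"
  using assms by algebra

lemma concyclic_in_strip_sorted_gap_le:
  fixes x1 x2 x3 y1 y2 y3 a b R \<delta> g :: real
  assumes circle: "(x1 - a)\<^sup>2 + (y1 - b)\<^sup>2 = R\<^sup>2" "(x2 - a)\<^sup>2 + (y2 - b)\<^sup>2 = R\<^sup>2"
      "(x3 - a)\<^sup>2 + (y3 - b)\<^sup>2 = R\<^sup>2"
    and "R > 0" "g > 0"
    and gaps: "x1 + g \<le> x2" "x2 + g \<le> x3"
    and strip: "\<bar>y1\<bar> \<le> \<delta>" "\<bar>y2\<bar> \<le> \<delta>" "\<bar>y3\<bar> \<le> \<delta>"
  shows "g\<^sup>2 \<le> 4 * R * \<delta>"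
proof -
  define K where "K = (x2 - x1) * (y3 - y1) - (x3 - x1) * (y2 - y1)"
  have "K = (x2 - x1) * (y3 - y2) - (x3 - x2) * (y2 - y1)"
    by (simp add: K_def algebra_simps)
  moreover have "\<bar>(x2 - x1) * (y3 - y2)\<bar> \<le> (x2 - x1) * (2 * \<delta>)"
    and "\<bar>(x3 - x2) * (y2 - y1)\<bar> \<le> (x3 - x2) * (2 * \<delta>)"
    using gaps strip \<open>g > 0\<close> by (simp_all add: abs_mult mult_left_mono)
  ultimately have "\<bar>K\<bar> \<le> 2 * \<delta> * (x3 - x1)"
    by (simp add: algebra_simps)
  then have K: "K\<^sup>2 \<le> (2 * \<delta> * (x3 - x1))\<^sup>2"
    using power_mono[OF _ abs_ge_zero] by (metis power2_abs)
  have "g\<^sup>2 * g\<^sup>2 * (x3 - x1)\<^sup>2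
      \<le> ((x1 - x2)\<^sup>2 + (y1 - y2)\<^sup>2) * ((x2 - x3)\<^sup>2 + (y2 - y3)\<^sup>2) * ((x1 - x3)\<^sup>2 + (y1 - y3)\<^sup>2)"
  proof (intro mult_mono)
    have "g\<^sup>2 \<le> (x2 - x1)\<^sup>2" "g\<^sup>2 \<le> (x3 - x2)\<^sup>2"
      using gaps \<open>g > 0\<close> by (simp_all add: power_mono)
    then show "g\<^sup>2 \<le> (x1 - x2)\<^sup>2 + (y1 - y2)\<^sup>2" "g\<^sup>2 \<le> (x2 - x3)\<^sup>2 + (y2 - y3)\<^sup>2"
      by (simp_all add: add_increasing2 power2_commute)
  qed (simp_all add: add_increasing2 power2_commute)
  also have "\<dots> = 4 * R\<^sup>2 * K\<^sup>2"
    unfolding K_def by (rule circumradius_sides_product[OF circle])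
  also have "\<dots> \<le> 4 * R\<^sup>2 * (2 * \<delta> * (x3 - x1))\<^sup>2"
    using K by (simp add: mult_left_mono)
  also have "\<dots> = (4 * R * \<delta>)\<^sup>2 * (x3 - x1)\<^sup>2"
    by (simp add: power_mult_distrib)
  finally have "g\<^sup>2 * g\<^sup>2 * (x3 - x1)\<^sup>2 \<le> (4 * R * \<delta>)\<^sup>2 * (x3 - x1)\<^sup>2" .
  moreover have "x3 - x1 > 0"
    using gaps \<open>g > 0\<close> by linarith
  ultimately have "(g\<^sup>2)\<^sup>2 \<le> (4 * R * \<delta>)\<^sup>2"
    by (simp add: power2_eq_square[of "g\<^sup>2"])
  moreover have "4 * R * \<delta> \<ge> 0"
    using strip \<open>R > 0\<close> by simp
  ultimately show ?thesis
    by (rule power2_le_imp_le)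
qed

lemma concyclic_in_strip_gap_le:
  fixes x1 x2 x3 y1 y2 y3 a b R \<delta> g :: real
  assumes "(x1 - a)\<^sup>2 + (y1 - b)\<^sup>2 = R\<^sup>2" "(x2 - a)\<^sup>2 + (y2 - b)\<^sup>2 = R\<^sup>2"
      "(x3 - a)\<^sup>2 + (y3 - b)\<^sup>2 = R\<^sup>2"
    and "R > 0" "g > 0"
    and "g \<le> \<bar>x1 - x2\<bar>" "g \<le> \<bar>x1 - x3\<bar>" "g \<le> \<bar>x2 - x3\<bar>"
    and "\<bar>y1\<bar> \<le> \<delta>" "\<bar>y2\<bar> \<le> \<delta>" "\<bar>y3\<bar> \<le> \<delta>"
  shows "g\<^sup>2 \<le> 4 * R * \<delta>"
proof -
  note ordered = concyclic_in_strip_sorted_gap_le[OF _ _ _ \<open>R > 0\<close> \<open>g > 0\<close>]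
  consider "x1 + g \<le> x2" "x2 + g \<le> x3" | "x1 + g \<le> x3" "x3 + g \<le> x2"
    | "x2 + g \<le> x1" "x1 + g \<le> x3" | "x2 + g \<le> x3" "x3 + g \<le> x1"
    | "x3 + g \<le> x1" "x1 + g \<le> x2" | "x3 + g \<le> x2" "x2 + g \<le> x1"
    using assms(6-8) by linarith
  then show ?thesis
    by cases (use ordered assms(1-3) assms(9-11) in blast)+
qed

lemma collinear_isometry_to_axis:
  fixes S :: "(real^'n) set"
  assumes "collinear S"
  obtains f :: "real^'n \<Rightarrow> real^'n"
  where "\<And>x y. dist (f x) (f y) = dist x y" and "\<And>x. x \<in> S \<Longrightarrow> \<exists>c. f x = c *\<^sub>R axis k 1"
proof -
  obtain u v where line: "\<forall>x\<in>S. \<exists>c. x = u + c *\<^sub>R v"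
    using assms collinear_alt by blast
  obtain g :: "real^'n \<Rightarrow> real^'n" where g: "orthogonal_transformation g" "g v = norm v *\<^sub>R axis k 1"
    by (rule orthogonal_transformation_exists[of v "norm v *\<^sub>R axis k 1"]) simp
  have "dist (g (x - u)) (g (y - u)) = dist x y" for x y
  proof -
    have "dist (g (x - u)) (g (y - u)) = dist (x - u) (y - u)"
      using g(1) unfolding orthogonal_transformation_isometry by blast
    also have "\<dots> = dist x y"
      by (simp add: dist_norm)
    finally show ?thesis .
  qed
  moreover have "\<exists>c. g (x - u) = c *\<^sub>R axis k 1" if "x \<in> S" for x
  proof -
    obtain c where "x = u + c *\<^sub>R v"
      using line \<open>x \<in> S\<close> by blast
    then have "g (x - u) = c *\<^sub>R g v"
      using linear_scale[OF orthogonal_transformation_linear[OF g(1)]] by simp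
    also have "\<dots> = (c * norm v) *\<^sub>R axis k 1"
      using g(2) by simp
    finally show ?thesis
      by blast
  qed
  ultimately show ?thesis
    by (rule that)
qed

lemma dist_vec2_sq: "(dist x y)\<^sup>2 = (x$1 - y$1)\<^sup>2 + (x$2 - y$2)\<^sup>2" for x y :: "real^2"
  by (simp add: dist_vec_def L2_set_def sum_2 dist_real_def)

lemma concyclic_near_axis_gap_le:
  fixes C P1 P2 P3 Q1 Q2 Q3 :: "real^2" and R d \<delta> :: real
  assumes "R > 0" "2 * \<delta> < d"
    and on_circle: "dist P1 C = R" "dist P2 C = R" "dist P3 C = R"
    and on_axis: "Q1$2 = 0" "Q2$2 = 0" "Q3$2 = 0"
    and sep: "dist Q1 Q2 \<ge> d" "dist Q1 Q3 \<ge> d" "dist Q2 Q3 \<ge> d"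
    and near: "dist P1 Q1 \<le> \<delta>" "dist P2 Q2 \<le> \<delta>" "dist P3 Q3 \<le> \<delta>"
  shows "(d - 2 * \<delta>)\<^sup>2 \<le> 4 * R * \<delta>"
proof -
  have circle: "(P$1 - C$1)\<^sup>2 + (P$2 - C$2)\<^sup>2 = R\<^sup>2" if "dist P C = R" for P :: "real^2"
    using that dist_vec2_sq[of P C] by simp
  have strip: "\<bar>P$2\<bar> \<le> \<delta>" if "dist P Q \<le> \<delta>" "Q$2 = 0" for P Q :: "real^2"
  proof -
    have "dist (P$2) (Q$2) \<le> dist P Q"
      by (rule dist_vec_nth_le)
    then show ?thesis
      using that by (simp add: dist_real_def)
  qed
  have spread: "d - 2 * \<delta> \<le> \<bar>P$1 - P'$1\<bar>"
    if "dist Q Q' \<ge> d" "Q$2 = 0" "Q'$2 = 0" "dist P Q \<le> \<delta>" "dist P' Q' \<le> \<delta>"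
    for P P' Q Q' :: "real^2"
  proof -
    have "(dist Q Q')\<^sup>2 = (Q$1 - Q'$1)\<^sup>2"
      using that(2,3) dist_vec2_sq[of Q Q'] by simp
    then have "dist Q Q' = \<bar>Q$1 - Q'$1\<bar>"
      by (metis real_sqrt_abs abs_of_nonneg zero_le_dist)
    moreover have "dist (P$1) (Q$1) \<le> dist P Q" "dist (P'$1) (Q'$1) \<le> dist P' Q'"
      by (rule dist_vec_nth_le)+
    ultimately show ?thesis
      using that by (simp add: dist_real_def)
  qed
  show ?thesis
  proof (rule concyclic_in_strip_gap_le[OF circle[OF on_circle(1)] circle[OF on_circle(2)]
        circle[OF on_circle(3)] \<open>R > 0\<close>])
    show "d - 2 * \<delta> > 0"
      using \<open>2 * \<delta> < d\<close> by simp
  qed (use spread[OF sep(1) on_axis(1,2) near(1,2)] spread[OF sep(2) on_axis(1,3) near(1,3)]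
      spread[OF sep(3) on_axis(2,3) near(2,3)] strip[OF near(1) on_axis(1)]
      strip[OF near(2) on_axis(2)] strip[OF near(3) on_axis(3)] in auto)
qed

theorem lemma7p4:
  fixes C P1 P2 P3 Q1 Q2 Q3 :: "real ^ 2" and R d \<delta> :: real
  assumes "R > 0"
    and "dist P1 C = R" and "dist P2 C = R" and "dist P3 C = R"
    and "d > 0"
    and "dist Q1 Q2 \<ge> d" and "dist Q1 Q3 \<ge> d" and "dist Q2 Q3 \<ge> d"
    and "\<delta> \<ge> 0"
    and "dist P1 Q1 \<le> \<delta>" and "dist P2 Q2 \<le> \<delta>" and "dist P3 Q3 \<le> \<delta>"
    and "\<delta> < d\<^sup>2 / (2 * (R + d + sqrt ((R + d)\<^sup>2 - d\<^sup>2)))"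
  shows "\<not> collinear {Q1, Q2, Q3}"
proof
  assume "collinear {Q1, Q2, Q3}"
  then obtain f :: "real^2 \<Rightarrow> real^2" where iso: "\<And>x y. dist (f x) (f y) = dist x y"
    and line: "\<And>x. x \<in> {Q1, Q2, Q3} \<Longrightarrow> \<exists>c. f x = c *\<^sub>R axis 1 1"
    by (rule collinear_isometry_to_axis[where k = 1]) blast
  have on_axis: "f Q $ 2 = 0" if "Q \<in> {Q1, Q2, Q3}" for Q
    using line[OF that] by (auto simp: axis_def)
  note gap = threshold_imp_gap_bounds[OF assms(1,5,9,13)]
  have "(d - 2 * \<delta>)\<^sup>2 \<le> 4 * R * \<delta>"
    using concyclic_near_axis_gap_le[of R \<delta> d "f P1" "f C" "f P2" "f P3" "f Q1" "f Q2" "f Q3"]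
      gap(1) on_axis assms iso by simp
  with gap(2) show False
    by simp
qed

end
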